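(* Let $\mathbf R\subset\mathbb R^2$ be a region of area $1$ and let $O$ be a point in the interior of $\mathbf R$. Take $O$ as the origin of polar coordinates and assume that $\partial\mathbf R$ is the curve $\{(r(\theta),\theta):\theta\in[0,2\pi]\}$, where $r$ is positive, continuous and piecewise differentiable. Let $\mathcal P$ be the probability that $\triangle ABC$ contains $O$, where $A,B,C$ are independent and uniformly distributed in $\mathbf R$. For $\theta\in[0,2\pi]$, let $H(\theta)=\frac12\int_\theta^{\theta+\pi}r(\phi)^2\,d\phi$; this is the area of the part of $\mathbf R$ lying to the right of the line through the boundary points at angles $\theta$ and $\theta+\pi$. Let $h=\min_\theta H(\theta)$. Then $$\frac14-(1+4h)\Big(\frac12-h\Big)^2\le\mathcal P\le\frac14-2\Big(\frac12-h\Big)^3 .$$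
   Context: The function $r$ is extended $2\pi$-periodically. *)

theory Defs
  imports "HOL-Analysis.Analysis" "HOL-Probability.Probability"
begin

definition polar_region :: "(real \<Rightarrow> real) \<Rightarrow> real \<times> real \<Rightarrow> (real \<times> real) set" where
  "polar_region r p0 = {p0 + (t * cos \<theta>, t * sin \<theta>) | t \<theta>. 0 \<le> \<theta> \<and> \<theta> \<le> 2 * pi \<and> 0 \<le> t \<and> t \<le> r \<theta>}"

definition triangle_prob :: "(real \<times> real) set \<Rightarrow> real \<times> real \<Rightarrow> real" where
  "triangle_prob R p0 =
     (let M = uniform_measure lborel R in
      measure (M \<Otimes>\<^sub>M M \<Otimes>\<^sub>M M) {(a, b, c). p0 \<in> convex hull {a, b, c}})"

definition half_area :: "(real \<Rightarrow> real) \<Rightarrow> real \<Rightarrow> real" where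
  "half_area r \<theta> = integral {\<theta>..\<theta> + pi} (\<lambda>\<phi>. (r \<phi>)\<^sup>2) / 2"

end

theory Submission
  imports Defs
begin

text \<open>
  Up to a null set of collinear configurations, exactly one of four disjoint events occurs:
  \<open>O\<close> lies in the triangle \<open>ABC\<close>, or one of the three vertices sees the other two strictly on the
  left of the ray from \<open>O\<close> through it. Each of the last three events has probability
  \<open>I = E[L(A)\<^sup>2]\<close>, where \<open>L(a)\<close> is the area to the left of that ray, so \<open>P = 1 - 3 I\<close>.
  In polar coordinates \<open>L\<close> at angle \<open>\<theta>\<close> is \<open>H(\<theta>)\<close>, hence \<open>I = \<integral> f H\<^sup>2\<close> over a period, with
  \<open>f = r\<^sup>2/2\<close>. Starting the period at a minimiser \<open>\<theta>\<^sub>0\<close> of \<open>H\<close> and using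
  \<open>H(\<theta> + \<pi>) = 1 - H(\<theta>)\<close> and \<open>H' = f(\<theta> + \<pi>) - f(\<theta>)\<close>, it splits into the integral of
  \<open>f (H\<^sup>2 + (1 - H)\<^sup>2)\<close> over \<open>[\<theta>\<^sub>0, \<theta>\<^sub>0 + \<pi>]\<close> plus \<open>((1 - h)\<^sup>3 - h\<^sup>3)/3\<close>, where \<open>h = H(\<theta>\<^sub>0)\<close>;
  since \<open>h \<le> H \<le> 1 - h\<close>, the remaining integral lies between \<open>h/2\<close> and \<open>h (h\<^sup>2 + (1 - h)\<^sup>2)\<close>.
\<close>

section \<open>Periodic functions and windows of integration\<close>

lemma periodic_2pi_int:
  assumes "\<And>x. h (x + 2*pi) = h x"
  shows "h (x + 2*pi * of_int k) = h x"
proof -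
  have nat: "h (y + 2*pi * real n) = h y" for y n
  proof (induction n)
    case (Suc n)
    then show ?case using assms[of "y + 2*pi * real n"] by (simp add: algebra_simps)
  qed simp
  show ?thesis
  proof (cases "k \<ge> 0")
    case True
    then show ?thesis using nat[of x "nat k"] by simp
  next
    case False
    then show ?thesis using nat[of "x + 2*pi * of_int k" "nat (-k)"] by simp
  qed
qed

lemma angle_mod_2pi:
  obtains \<phi> k where "\<phi> \<in> {0..2*pi}" "\<theta> = \<phi> + 2*pi * of_int k"
proof
  define k where "k = \<lfloor>\<theta> / (2*pi)\<rfloor>"
  have "of_int k \<le> \<theta> / (2*pi)" "\<theta> / (2*pi) < of_int k + 1"
    unfolding k_def by linarith+
  then show "\<theta> - 2*pi * of_int k \<in> {0..2*pi}" by (simp add: field_simps)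
qed simp

lemma nn_integral_translate_Ioo:
  fixes h :: "real \<Rightarrow> ennreal"
  assumes [measurable]: "h \<in> borel_measurable borel"
  shows "(\<integral>\<^sup>+\<theta>. indicator {a<..<b} \<theta> * h \<theta> \<partial>lborel) =
    (\<integral>\<^sup>+\<theta>. indicator {a+c<..<b+c} \<theta> * h (\<theta> - c) \<partial>lborel)"
proof -
  have "indicator {a+c<..<b+c} (x + c) = (indicator {a<..<b} x :: ennreal)" for x
    by (auto simp: indicator_def)
  then show ?thesis
    using nn_integral_real_affine[of "\<lambda>\<theta>. indicator {a+c<..<b+c} \<theta> * h (\<theta> - c)" 1 c]
    by (simp add: add.commute)
qed

lemma nn_integral_periodic_window_shift:
  fixes h :: "real \<Rightarrow> ennreal"
  assumes [measurable]: "h \<in> borel_measurable borel"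
    and per: "\<And>\<theta>. h (\<theta> + 2*pi) = h \<theta>"
  shows "(\<integral>\<^sup>+\<theta>. indicator {a<..<a+2*pi} \<theta> * h \<theta> \<partial>lborel) =
    (\<integral>\<^sup>+\<theta>. indicator {b<..<b+2*pi} \<theta> * h \<theta> \<partial>lborel)"
proof -
  have per': "h (\<theta> - 2*pi * of_int k) = h \<theta>" for \<theta> k
    using periodic_2pi_int[of h "\<theta> - 2*pi * of_int k" k, OF per] by simp
  have within_period: "(\<integral>\<^sup>+\<theta>. indicator {a<..<a+2*pi} \<theta> * h \<theta> \<partial>lborel) =
      (\<integral>\<^sup>+\<theta>. indicator {b<..<b+2*pi} \<theta> * h \<theta> \<partial>lborel)"
    if ab: "a \<le> b" "b \<le> a + 2*pi" for a b
  proof -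
    \<comment> \<open>cut at \<open>b\<close> and move the piece \<open>(a, b)\<close> one period to the right\<close>
    have "(\<integral>\<^sup>+\<theta>. indicator {a<..<a+2*pi} \<theta> * h \<theta> \<partial>lborel) =
        (\<integral>\<^sup>+\<theta>. indicator {a<..<b} \<theta> * h \<theta> + indicator {b<..<a+2*pi} \<theta> * h \<theta> \<partial>lborel)"
      using ab by (intro nn_integral_cong_AE eventually_mono[OF AE_lborel_singleton[of b]])
        (auto simp: indicator_def)
    also have "\<dots> = (\<integral>\<^sup>+\<theta>. indicator {a+2*pi<..<b+2*pi} \<theta> * h \<theta> \<partial>lborel) +
        (\<integral>\<^sup>+\<theta>. indicator {b<..<a+2*pi} \<theta> * h \<theta> \<partial>lborel)"
      using nn_integral_translate_Ioo[of h a b "2*pi"] per'[of _ 1]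
      by (subst nn_integral_add) auto
    also have "\<dots> = (\<integral>\<^sup>+\<theta>. indicator {b<..<a+2*pi} \<theta> * h \<theta> + indicator {a+2*pi<..<b+2*pi} \<theta> * h \<theta> \<partial>lborel)"
      by (subst nn_integral_add) (auto simp: add.commute)
    also have "\<dots> = (\<integral>\<^sup>+\<theta>. indicator {b<..<b+2*pi} \<theta> * h \<theta> \<partial>lborel)"
      using ab by (intro nn_integral_cong_AE eventually_mono[OF AE_lborel_singleton[of "a+2*pi"]])
        (auto simp: indicator_def)
    finally show ?thesis .
  qed
  obtain \<phi> k where \<phi>: "\<phi> \<in> {0..2*pi}" and b: "b - a = \<phi> + 2*pi * of_int k"
    using angle_mod_2pi by blast
  have "(\<integral>\<^sup>+\<theta>. indicator {a<..<a+2*pi} \<theta> * h \<theta> \<partial>lborel) =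
      (\<integral>\<^sup>+\<theta>. indicator {a+\<phi><..<a+\<phi>+2*pi} \<theta> * h \<theta> \<partial>lborel)"
    using \<phi> by (intro within_period) auto
  also have "\<dots> = (\<integral>\<^sup>+\<theta>. indicator {b<..<b+2*pi} \<theta> * h \<theta> \<partial>lborel)"
    using nn_integral_translate_Ioo[of h "a+\<phi>" "a+\<phi>+2*pi" "2*pi * of_int k"] b
    unfolding per' by (simp add: algebra_simps)
  finally show ?thesis .
qed

lemma nn_integral_Ioo_eq_integral:
  fixes q :: "real \<Rightarrow> real"
  assumes "continuous_on {a..b} q" "\<And>x. x \<in> {a..b} \<Longrightarrow> q x \<ge> 0"
  shows "(\<integral>\<^sup>+\<theta>. indicator {a<..<b} \<theta> * ennreal (q \<theta>) \<partial>lborel) = ennreal (integral {a..b} q)"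
proof -
  have "(\<integral>\<^sup>+\<theta>. indicator {a<..<b} \<theta> * ennreal (q \<theta>) \<partial>lborel) = (\<integral>\<^sup>+\<theta>\<in>{a..b}. ennreal (q \<theta>) \<partial>lborel)"
    by (intro nn_integral_cong_AE eventually_mono[OF eventually_conj[OF AE_lborel_singleton[of a] AE_lborel_singleton[of b]]])
       (auto simp: indicator_def)
  also have "\<dots> = ennreal (integral {a..b} q)"
    by (rule nn_integral_has_integral_lebesgue') (use assms in \<open>auto intro!: integrable_continuous_interval\<close>)
  finally show ?thesis .
qed

lemma has_real_derivative_integral_window:
  fixes f :: "real \<Rightarrow> real"
  assumes f: "continuous_on UNIV f" and c: "c \<ge> 0"
  shows "((\<lambda>y. integral {y..y+c} f) has_real_derivative f (x + c) - f x) (at x)"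
proof -
  define F where "F y = integral {x-1..y} f" for y
  have F: "(F has_real_derivative f y) (at y)" if "y > x - 1" for y
  proof -
    have "(F has_real_derivative f y) (at y within {x-1..y+1})"
      unfolding F_def using that by (intro integral_has_real_derivative continuous_on_subset[OF f]) auto
    moreover have "at y within {x-1..y+1} = at y"
      using that by (intro at_within_interior) (simp add: interior_atLeastAtMost_real)
    ultimately show ?thesis by simp
  qed
  have "((\<lambda>y. F (y + c) - F y) has_real_derivative f (x + c) - f x) (at x)"
    using c by (auto intro!: derivative_eq_intros DERIV_chain2[OF F])
  moreover have "\<forall>\<^sub>F y in nhds x. integral {y..y+c} f = F (y + c) - F y"
  proof -
    have "\<forall>\<^sub>F y in nhds x. y \<in> {x-1<..}" by (intro eventually_nhds_in_open) auto
    then show ?thesis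
    proof eventually_elim
      case (elim y)
      then have "F y + integral {y..y+c} f = F (y + c)"
        unfolding F_def using c
        by (intro Henstock_Kurzweil_Integration.integral_combine integrable_continuous_interval
            continuous_on_subset[OF f]) auto
      then show ?case by simp
    qed
  qed
  ultimately show ?thesis by (subst DERIV_cong_ev[OF refl _ refl]) auto
qed

section \<open>Polar coordinates\<close>

lemma nn_integral_arctan_density_Ioi:
  "(\<integral>\<^sup>+s. ennreal (1/(1+s\<^sup>2)) * indicator {a<..} s \<partial>lborel) = ennreal (pi/2 - arctan a)"
proof -
  have "(\<integral>\<^sup>+s. ennreal (1/(1+s\<^sup>2)) * indicator {a<..} s \<partial>lborel) =
        (\<integral>\<^sup>+s\<in>{a..}. ennreal (1/(1+s\<^sup>2)) \<partial>lborel)"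
    by (intro nn_integral_cong_AE eventually_mono[OF AE_lborel_singleton[of a]])
       (auto simp: indicator_def)
  also have "\<dots> = ennreal (pi/2 - arctan a)"
  proof (rule nn_integral_FTC_atLeast)
    show "(arctan \<longlongrightarrow> pi/2) at_top" by (rule tendsto_arctan_at_top)
    show "(arctan has_real_derivative 1 / (1 + x\<^sup>2)) (at x)" for x
      by (auto intro!: derivative_eq_intros simp: power2_eq_square add_nonneg_eq_0_iff divide_inverse)
  qed (auto simp: add_pos_nonneg)
  finally show ?thesis .
qed

lemma nn_integral_arctan_density:
  "(\<integral>\<^sup>+s. ennreal (1/(1+s\<^sup>2)) \<partial>lborel) = ennreal pi"
proof -
  have "(\<integral>\<^sup>+s. ennreal (1/(1+s\<^sup>2)) \<partial>lborel) =
    (\<integral>\<^sup>+s. ennreal (1/(1+s\<^sup>2)) * indicator {0<..} s + ennreal (1/(1+s\<^sup>2)) * indicator {..<0} s \<partial>lborel)"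
    by (intro nn_integral_cong_AE eventually_mono[OF AE_lborel_singleton[of 0]])
       (auto simp: indicator_def)
  also have "\<dots> = (\<integral>\<^sup>+s. ennreal (1/(1+s\<^sup>2)) * indicator {0<..} s \<partial>lborel) +
     (\<integral>\<^sup>+s. ennreal (1/(1+s\<^sup>2)) * indicator {..<0} s \<partial>lborel)"
    by (rule nn_integral_add) auto
  also have "(\<integral>\<^sup>+s. ennreal (1/(1+s\<^sup>2)) * indicator {..<0} s \<partial>lborel) =
      (\<integral>\<^sup>+s. ennreal (1/(1+s\<^sup>2)) * indicator {0<..} s \<partial>lborel)"
    by (subst nn_integral_real_affine[where c="-1" and t=0])
      (auto simp: indicator_def intro!: nn_integral_cong)
  finally show ?thesis using nn_integral_arctan_density_Ioi[of 0]
    by (simp flip: ennreal_plus)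
qed

lemma distr_arctan_density:
  "distr (density lborel (\<lambda>s. ennreal (1/(1+s\<^sup>2)))) borel arctan =
   density lborel (indicator {-(pi/2)<..<pi/2})"
proof (rule measure_eqI_lessThan)
  fix x :: real
  let ?D = "distr (density lborel (\<lambda>s. ennreal (1/(1+s\<^sup>2)))) borel arctan"
  have D: "emeasure ?D {x<..} = (\<integral>\<^sup>+s. ennreal (1/(1+s\<^sup>2)) * indicator {s. x < arctan s} s \<partial>lborel)"
    by (subst emeasure_distr) (auto simp: emeasure_density vimage_def Int_def intro!: nn_integral_cong)
  have U: "emeasure (density lborel (indicator {-(pi/2)<..<pi/2})) {x<..} =
      emeasure lborel ({-(pi/2)<..<pi/2} \<inter> {x<..})"
    by (subst emeasure_density) (auto simp: indicator_inter_arith[symmetric] intro!: nn_integral_cong)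
  consider "pi/2 \<le> x" | "x \<le> -(pi/2)" | "-(pi/2) < x" "x < pi/2" by linarith
  then have "emeasure ?D {x<..} = emeasure (density lborel (indicator {-(pi/2)<..<pi/2})) {x<..} \<and>
      emeasure ?D {x<..} < \<infinity>"
  proof cases
    case 1
    then have "arctan s < x" for s
      using arctan_ubound[of s] by linarith
    then have "{s. x < arctan s} = {}" "{-(pi/2)<..<pi/2} \<inter> {x<..} = {}"
      using 1 by (auto dest: less_asym)
    then show ?thesis unfolding D U by simp
  next
    case 2
    then have "{s. x < arctan s} = UNIV" "{-(pi/2)<..<pi/2} \<inter> {x<..} = {-(pi/2)<..<pi/2}"
      using arctan_lbound by (auto intro: le_less_trans)
    then show ?thesis unfolding D U using nn_integral_arctan_density by simp
  next
    case 3
    then have "x < arctan s \<longleftrightarrow> tan x < s" for s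
      by (metis arctan_less_iff arctan_tan minus_divide_left)
    then have "{s. x < arctan s} = {tan x<..}" by auto
    moreover have "{-(pi/2)<..<pi/2} \<inter> {x<..} = {x<..<pi/2}" using 3 by auto
    moreover have "arctan (tan x) = x" using 3 by (intro arctan_tan) auto
    ultimately show ?thesis
      unfolding D U using nn_integral_arctan_density_Ioi[of "tan x"] 3 by simp
  qed
  then show "emeasure ?D {x<..} < \<infinity>"
    "emeasure ?D {x<..} = emeasure (density lborel (indicator {-(pi/2)<..<pi/2})) {x<..}" by auto
qed auto

lemma nn_integral_arctan_substitution:
  assumes [measurable]: "K \<in> borel_measurable borel"
  shows "(\<integral>\<^sup>+s. ennreal (1/(1+s\<^sup>2)) * K (arctan s) \<partial>lborel) =
         (\<integral>\<^sup>+\<theta>. indicator {-(pi/2)<..<pi/2} \<theta> * K \<theta> \<partial>lborel)"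
proof -
  have "(\<integral>\<^sup>+s. ennreal (1/(1+s\<^sup>2)) * K (arctan s) \<partial>lborel) =
      (\<integral>\<^sup>+s. K (arctan s) \<partial>density lborel (\<lambda>s. ennreal (1/(1+s\<^sup>2))))"
    by (subst nn_integral_density) auto
  also have "\<dots> = (\<integral>\<^sup>+\<theta>. K \<theta> \<partial>distr (density lborel (\<lambda>s. ennreal (1/(1+s\<^sup>2)))) borel arctan)"
    by (subst nn_integral_distr) auto
  also have "\<dots> = (\<integral>\<^sup>+\<theta>. indicator {-(pi/2)<..<pi/2} \<theta> * K \<theta> \<partial>lborel)"
    unfolding distr_arctan_density by (subst nn_integral_density) auto
  finally show ?thesis .
qed

definition radial_integral :: "(real \<times> real \<Rightarrow> ennreal) \<Rightarrow> real \<times> real \<Rightarrow> real \<Rightarrow> ennreal" where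
  "radial_integral G p \<theta> =
     (\<integral>\<^sup>+t. indicator {0<..} t * ennreal t * G (p + (t * cos \<theta>, t * sin \<theta>)) \<partial>lborel)"

lemma measurable_radial_integral[measurable]:
  assumes [measurable]: "G \<in> borel_measurable borel"
  shows "radial_integral G p \<in> borel_measurable borel"
  unfolding radial_integral_def by measurable

lemma radial_integral_periodic: "radial_integral G p (\<theta> + 2*pi) = radial_integral G p \<theta>"
  by (simp add: radial_integral_def)

lemma radial_integral_reflect:
  "radial_integral (\<lambda>z. G (- z)) 0 \<theta> = radial_integral G 0 (\<theta> + pi)"
  by (simp add: radial_integral_def)

lemma radial_integral_indicator_ray:
  assumes "\<rho> \<ge> 0" and "\<And>t. t > 0 \<Longrightarrow> G (p + (t * cos \<theta>, t * sin \<theta>)) = indicator {..\<rho>} t * c"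
  shows "radial_integral G p \<theta> = ennreal (\<rho>\<^sup>2 / 2) * c"
proof -
  have "radial_integral G p \<theta> = (\<integral>\<^sup>+t. (indicator {0..\<rho>} t * ennreal t) * c \<partial>lborel)"
    unfolding radial_integral_def
    by (intro nn_integral_cong_AE eventually_mono[OF AE_lborel_singleton[of 0]])
       (auto simp: indicator_def assms(2))
  also have "\<dots> = (\<integral>\<^sup>+t\<in>{0..\<rho>}. ennreal t \<partial>lborel) * c"
    by (subst nn_integral_multc) (auto simp: mult.commute)
  also have "(\<integral>\<^sup>+t\<in>{0..\<rho>}. ennreal t \<partial>lborel) = ennreal (\<rho>\<^sup>2/2 - 0\<^sup>2/2)"
    by (rule nn_integral_FTC_Icc) (auto intro!: derivative_eq_intros simp: assms(1))
  finally show ?thesis by simp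
qed

lemma nn_integral_along_slope:
  assumes [measurable]: "F \<in> borel_measurable borel"
  shows "(\<integral>\<^sup>+u. indicator {0<..} u * ennreal u * F (u, u * s) \<partial>lborel) =
     ennreal (1/(1+s\<^sup>2)) * radial_integral F 0 (arctan s)"
proof -
  define c where "c = 1 / sqrt (1 + s\<^sup>2)"
  have c: "c > 0" unfolding c_def by (simp add: add_pos_nonneg)
  have cc: "c * c = 1/(1+s\<^sup>2)" unfolding c_def
    by (simp add: add_pos_nonneg power2_eq_square flip: real_sqrt_mult)
  have polar: "(c * t, c * t * s) = (t * cos (arctan s), t * sin (arctan s))" for t
    by (simp add: c_def cos_arctan sin_arctan)
  have "(\<integral>\<^sup>+u. indicator {0<..} u * ennreal u * F (u, u * s) \<partial>lborel) =
     ennreal c * (\<integral>\<^sup>+t. indicator {0<..} (c*t) * ennreal (c*t) * F (c*t, c*t * s) \<partial>lborel)"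
    using nn_integral_real_affine[of "\<lambda>u. indicator {0<..} u * ennreal u * F (u, u * s)" c 0] c
    by simp
  also have "\<dots> = (\<integral>\<^sup>+t. ennreal (c*c) *
      (indicator {0<..} t * ennreal t * F (t * cos (arctan s), t * sin (arctan s))) \<partial>lborel)"
    unfolding polar using c
    by (subst nn_integral_cmult[symmetric])
      (auto simp: indicator_def zero_less_mult_iff ennreal_mult' ac_simps intro!: nn_integral_cong)
  also have "\<dots> = ennreal (1/(1+s\<^sup>2)) * radial_integral F 0 (arctan s)"
    unfolding radial_integral_def cc by (subst nn_integral_cmult) auto
  finally show ?thesis .
qed

lemma nn_integral_right_half_plane_polar:
  fixes F :: "real \<times> real \<Rightarrow> ennreal"
  assumes [measurable]: "F \<in> borel_measurable borel"
  shows "(\<integral>\<^sup>+u. indicator {0<..} u * (\<integral>\<^sup>+v. F (u, v) \<partial>lborel) \<partial>lborel) =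
    (\<integral>\<^sup>+\<theta>. indicator {-(pi/2)<..<pi/2} \<theta> * radial_integral F 0 \<theta> \<partial>lborel)"
proof -
  have "(\<integral>\<^sup>+u. indicator {0<..} u * (\<integral>\<^sup>+v. F (u, v) \<partial>lborel) \<partial>lborel) =
      (\<integral>\<^sup>+u. \<integral>\<^sup>+s. indicator {0<..} u * ennreal u * F (u, u * s) \<partial>lborel \<partial>lborel)"
  proof (intro nn_integral_cong)
    fix u :: real
    show "indicator {0<..} u * (\<integral>\<^sup>+v. F (u, v) \<partial>lborel) =
        (\<integral>\<^sup>+s. indicator {0<..} u * ennreal u * F (u, u * s) \<partial>lborel)"
    proof (cases "u > 0")
      case True
      then show ?thesis
        using nn_integral_real_affine[of "\<lambda>v. F (u, v)" u 0]
        by (simp add: nn_integral_cmult)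
    qed simp
  qed
  also have "\<dots> = (\<integral>\<^sup>+s. \<integral>\<^sup>+u. indicator {0<..} u * ennreal u * F (u, u * s) \<partial>lborel \<partial>lborel)"
    by (rule lborel_pair.Fubini') simp
  also have "\<dots> = (\<integral>\<^sup>+s. ennreal (1/(1+s\<^sup>2)) * radial_integral F 0 (arctan s) \<partial>lborel)"
    by (intro nn_integral_cong nn_integral_along_slope) simp
  also have "\<dots> = (\<integral>\<^sup>+\<theta>. indicator {-(pi/2)<..<pi/2} \<theta> * radial_integral F 0 \<theta> \<partial>lborel)"
    by (rule nn_integral_arctan_substitution) simp
  finally show ?thesis .
qed

lemma nn_integral_polar_origin:
  fixes F :: "real \<times> real \<Rightarrow> ennreal"
  assumes [measurable]: "F \<in> borel_measurable borel"
  shows "(\<integral>\<^sup>+z. F z \<partial>lborel) =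
    (\<integral>\<^sup>+\<theta>. indicator {-(pi/2)<..<3*pi/2} \<theta> * radial_integral F 0 \<theta> \<partial>lborel)"
proof -
  \<comment> \<open>the left half-plane is the reflection of the right one, which shifts angles by \<open>\<pi>\<close>\<close>
  let ?F' = "\<lambda>z. F (- z)"
  have "(\<integral>\<^sup>+z. F z \<partial>lborel) = (\<integral>\<^sup>+u. \<integral>\<^sup>+v. F (u, v) \<partial>lborel \<partial>lborel)"
    by (subst lborel_prod[symmetric]) (rule lborel.nn_integral_fst[symmetric], simp add: lborel_prod)
  also have "\<dots> = (\<integral>\<^sup>+u. indicator {0<..} u * (\<integral>\<^sup>+v. F (u, v) \<partial>lborel) +
      indicator {0<..} (-u) * (\<integral>\<^sup>+v. F (u, v) \<partial>lborel) \<partial>lborel)"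
    by (intro nn_integral_cong_AE eventually_mono[OF AE_lborel_singleton[of 0]])
      (auto simp: indicator_def)
  also have "\<dots> = (\<integral>\<^sup>+u. indicator {0<..} u * (\<integral>\<^sup>+v. F (u, v) \<partial>lborel) \<partial>lborel) +
      (\<integral>\<^sup>+u. indicator {0<..} u * (\<integral>\<^sup>+v. ?F' (u, v) \<partial>lborel) \<partial>lborel)"
  proof -
    have "(\<integral>\<^sup>+v. F (-u, v) \<partial>lborel) = (\<integral>\<^sup>+v. ?F' (u, v) \<partial>lborel)" for u
      using nn_integral_real_affine[of "\<lambda>v. F (-u, v)" "-1" 0] by simp
    then show ?thesis
      using nn_integral_real_affine[of "\<lambda>u. indicator {0<..} (-u) * (\<integral>\<^sup>+v. F (u, v) \<partial>lborel)" "-1" 0]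
      by (subst nn_integral_add) auto
  qed
  also have "\<dots> = (\<integral>\<^sup>+\<theta>. indicator {-(pi/2)<..<pi/2} \<theta> * radial_integral F 0 \<theta> \<partial>lborel) +
      (\<integral>\<^sup>+\<theta>. indicator {pi/2<..<3*pi/2} \<theta> * radial_integral F 0 \<theta> \<partial>lborel)"
    using nn_integral_right_half_plane_polar[of F] nn_integral_right_half_plane_polar[of ?F']
      nn_integral_translate_Ioo[of "\<lambda>\<theta>. radial_integral F 0 (\<theta> + pi)" "-(pi/2)" "pi/2" pi]
    by (simp add: radial_integral_reflect)
  also have "\<dots> = (\<integral>\<^sup>+\<theta>. indicator {-(pi/2)<..<3*pi/2} \<theta> * radial_integral F 0 \<theta> \<partial>lborel)"
    by (subst nn_integral_add[symmetric])
      (auto intro!: nn_integral_cong_AE eventually_mono[OF AE_lborel_singleton[of "pi/2"]]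
        simp: indicator_def)
  finally show ?thesis .
qed

lemma nn_integral_polar:
  assumes [measurable]: "G \<in> borel_measurable borel"
  shows "(\<integral>\<^sup>+x. G x \<partial>lborel) = (\<integral>\<^sup>+\<theta>. indicator {a<..<a+2*pi} \<theta> * radial_integral G p \<theta> \<partial>lborel)"
proof -
  have "(\<integral>\<^sup>+x. G x \<partial>lborel) = (\<integral>\<^sup>+z. G (p + z) \<partial>lborel)"
    by (subst lborel_distr_plus[symmetric, of p]) (simp add: nn_integral_distr)
  also have "\<dots> = (\<integral>\<^sup>+\<theta>. indicator {-(pi/2)<..<-(pi/2)+2*pi} \<theta> * radial_integral G p \<theta> \<partial>lborel)"
    using nn_integral_polar_origin[of "\<lambda>z. G (p + z)"] by (simp add: radial_integral_def)
  also have "\<dots> = (\<integral>\<^sup>+\<theta>. indicator {a<..<a+2*pi} \<theta> * radial_integral G p \<theta> \<partial>lborel)"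
    by (rule nn_integral_periodic_window_shift) (simp_all add: radial_integral_periodic)
  finally show ?thesis .
qed

section \<open>Triangles around a point\<close>

definition cross2 :: "real \<times> real \<Rightarrow> real \<times> real \<Rightarrow> real" where
  "cross2 u v = fst u * snd v - snd u * fst v"

lemma cross2_anticomm: "cross2 v u = - cross2 u v"
  unfolding cross2_def by simp

lemma cross2_polar: "cross2 (s * cos \<alpha>, s * sin \<alpha>) (t * cos \<theta>, t * sin \<theta>) = s * t * sin (\<theta> - \<alpha>)"
  unfolding cross2_def by (simp add: sin_diff algebra_simps)

lemma measurable_cross2[measurable]:
  assumes [measurable]: "f \<in> borel_measurable M" "g \<in> borel_measurable M"
  shows "(\<lambda>x. cross2 (f x) (g x)) \<in> borel_measurable M"
proof -
  have "(\<lambda>x. (f x, g x)) \<in> M \<rightarrow>\<^sub>M borel \<Otimes>\<^sub>M borel" by (intro measurable_Pair assms)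
  then have "(\<lambda>x. (f x, g x)) \<in> borel_measurable M" by (simp only: borel_prod)
  moreover have "(\<lambda>(u, v). cross2 u v) \<in> borel_measurable borel"
    unfolding cross2_def case_prod_beta
    by (intro borel_measurable_continuous_onI continuous_intros)
  ultimately show ?thesis
    using measurable_compose[of "\<lambda>x. (f x, g x)" M borel "\<lambda>(u, v). cross2 u v" borel] by simp
qed

lemma mem_convex_hull_3_iff_translate:
  fixes p a b c :: "real \<times> real"
  shows "p \<in> convex hull {a, b, c} \<longleftrightarrow> 0 \<in> convex hull {a - p, b - p, c - p}"
proof -
  have "{a - p, b - p, c - p} = (\<lambda>x. - p + x) ` {a, b, c}" by auto
  then have "0 \<in> convex hull {a - p, b - p, c - p} \<longleftrightarrow> 0 \<in> (\<lambda>x. - p + x) ` (convex hull {a, b, c})"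
    by (simp only: convex_hull_translation)
  also have "\<dots> \<longleftrightarrow> p \<in> convex hull {a, b, c}"
    by (auto simp: image_iff neg_eq_iff_add_eq_0 add.commute)
  finally show ?thesis ..
qed

lemma zero_notin_convex_hull_one_sided:
  assumes "cross2 x y > 0" "cross2 x z > 0"
  shows "0 \<notin> convex hull {x, y, z}"
proof
  assume "0 \<in> convex hull {x, y, z}"
  then obtain u v w where uvw: "0 \<le> u" "0 \<le> v" "0 \<le> w" "u + v + w = 1"
    and eq: "u *\<^sub>R x + v *\<^sub>R y + w *\<^sub>R z = 0"
    unfolding convex_hull_3 by auto
  \<comment> \<open>pairing the relation with \<open>x\<close> kills the \<open>u\<close>-term\<close>
  have "v * cross2 x y + w * cross2 x z = cross2 x (u *\<^sub>R x + v *\<^sub>R y + w *\<^sub>R z)"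
    by (simp add: cross2_def algebra_simps)
  then have "v * cross2 x y + w * cross2 x z = 0" using eq by (simp add: cross2_def)
  then have "v = 0" "w = 0"
    using uvw assms by (smt (verit) mult_nonneg_nonneg mult_pos_pos)+
  then have "x = 0" using uvw eq by simp
  then show False using assms by (simp add: cross2_def)
qed

lemma zero_in_convex_hull_not_one_sided:
  assumes nz: "cross2 x y \<noteq> 0" "cross2 y z \<noteq> 0" "cross2 z x \<noteq> 0"
    and "\<not> (cross2 x y > 0 \<and> cross2 x z > 0)"
    and "\<not> (cross2 y z > 0 \<and> cross2 y x > 0)"
    and "\<not> (cross2 z x > 0 \<and> cross2 z y > 0)"
  shows "0 \<in> convex hull {x, y, z}"
proof -
  define s1 s2 s3 where "s1 = cross2 y z" "s2 = cross2 z x" "s3 = cross2 x y"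
  \<comment> \<open>Cramer's rule: \<open>x, y, z\<close> are linearly dependent with these coefficients\<close>
  have rel: "s1 *\<^sub>R x + s2 *\<^sub>R y + s3 *\<^sub>R z = 0"
    unfolding s1_s2_s3_def cross2_def by (cases x, cases y, cases z) (simp add: algebra_simps zero_prod_def)
  have signs: "(s1 > 0 \<and> s2 > 0 \<and> s3 > 0) \<or> (s1 < 0 \<and> s2 < 0 \<and> s3 < 0)"
    using assms cross2_anticomm[of x y] cross2_anticomm[of y z] cross2_anticomm[of z x]
    unfolding s1_s2_s3_def by linarith
  define S where "S = s1 + s2 + s3"
  have "S \<noteq> 0" using signs unfolding S_def by linarith
  have "(s1 / S) *\<^sub>R x + (s2 / S) *\<^sub>R y + (s3 / S) *\<^sub>R z = (1 / S) *\<^sub>R (s1 *\<^sub>R x + s2 *\<^sub>R y + s3 *\<^sub>R z)"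
    by (simp add: scaleR_add_right)
  then have "(s1 / S) *\<^sub>R x + (s2 / S) *\<^sub>R y + (s3 / S) *\<^sub>R z = 0" using rel by simp
  moreover have "0 \<le> s1 / S" "0 \<le> s2 / S" "0 \<le> s3 / S"
    using signs unfolding S_def by (auto intro: divide_nonpos_neg)
  moreover have "s1 / S + s2 / S + s3 / S = 1"
    using \<open>S \<noteq> 0\<close> unfolding S_def by (simp add: add_divide_distrib[symmetric])
  ultimately show ?thesis unfolding convex_hull_3 by force
qed

lemma closed_triples_with_p_in_convex_hull:
  fixes p :: "real \<times> real"
  shows "closed {t. p \<in> convex hull {fst t, fst (snd t), snd (snd t)}}"
proof -
  define S :: "(real \<times> real \<times> real) set" where
    "S = {(u, v, w). 0 \<le> u \<and> 0 \<le> v \<and> 0 \<le> w \<and> u + v + w = 1}"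
  define T :: "((real \<times> real \<times> real) \<times> ((real \<times> real) \<times> (real \<times> real) \<times> (real \<times> real))) set" where
    "T = {x. p = fst (fst x) *\<^sub>R fst (snd x) + fst (snd (fst x)) *\<^sub>R fst (snd (snd x)) +
      snd (snd (fst x)) *\<^sub>R snd (snd (snd x))}"
  have "compact S"
  proof -
    have "S = {c. 0 \<le> fst c \<and> 0 \<le> fst (snd c) \<and> 0 \<le> snd (snd c) \<and> fst c + fst (snd c) + snd (snd c) = 1}"
      unfolding S_def by auto
    then have "closed S"
      by (simp only:) (intro closed_Collect_conj closed_Collect_le closed_Collect_eq continuous_intros)
    moreover have "S \<subseteq> cbox (0, 0, 0) (1, 1, 1)" unfolding S_def by (auto simp: cbox_Pair_iff)
    ultimately show ?thesis using bounded_cbox bounded_subset compact_eq_bounded_closed by blast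
  qed
  moreover have "closed T"
    unfolding T_def by (intro closed_Collect_eq continuous_intros)
  ultimately have "closed {t. \<exists>c. c \<in> S \<and> (c, t) \<in> T}" by (rule closed_compact_projection)
  moreover have "{t. \<exists>c. c \<in> S \<and> (c, t) \<in> T} = {t. p \<in> convex hull {fst t, fst (snd t), snd (snd t)}}"
    unfolding S_def T_def convex_hull_3 by force
  ultimately show ?thesis by simp
qed

section \<open>Random triangles\<close>

context sigma_finite_measure
begin

lemma sigma_finite_measure_pair_self: "sigma_finite_measure (M \<Otimes>\<^sub>M M)"
  by (intro sigma_finite_pair_measure sigma_finite_measure_axioms)

lemma nn_integral_section_measure_square:
  assumes [measurable]: "Q \<in> sets (M \<Otimes>\<^sub>M M)"
  shows "(\<integral>\<^sup>+a. \<integral>\<^sup>+x. indicator Q (x, a) * emeasure M (Pair x -` Q) \<partial>M \<partial>M) =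
    (\<integral>\<^sup>+x. (emeasure M (Pair x -` Q))\<^sup>2 \<partial>M)"
proof -
  interpret MM: pair_sigma_finite M M ..
  have [measurable]: "(\<lambda>x. emeasure M (Pair x -` Q)) \<in> borel_measurable M"
    by (rule measurable_emeasure_Pair) simp
  have "(\<integral>\<^sup>+a. \<integral>\<^sup>+x. indicator Q (x, a) * emeasure M (Pair x -` Q) \<partial>M \<partial>M) =
      (\<integral>\<^sup>+x. \<integral>\<^sup>+a. indicator Q (x, a) * emeasure M (Pair x -` Q) \<partial>M \<partial>M)"
    by (rule MM.Fubini') measurable
  also have "\<dots> = (\<integral>\<^sup>+x. (\<integral>\<^sup>+a. indicator (Pair x -` Q) a \<partial>M) * emeasure M (Pair x -` Q) \<partial>M)"
    by (subst nn_integral_multc[symmetric])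
      (auto simp: indicator_def intro!: nn_integral_cong,
        intro borel_measurable_indicator sets_Pair1[OF assms])
  also have "\<dots> = (\<integral>\<^sup>+x. (emeasure M (Pair x -` Q))\<^sup>2 \<partial>M)"
    by (intro nn_integral_cong) (simp add: power2_eq_square)
  finally show ?thesis .
qed

lemma emeasure_triple_first_vertex:
  assumes Q[measurable]: "Q \<in> sets (M \<Otimes>\<^sub>M M)"
  shows "emeasure (M \<Otimes>\<^sub>M M \<Otimes>\<^sub>M M) {(a, b, c). (a, b) \<in> Q \<and> (a, c) \<in> Q} =
    (\<integral>\<^sup>+a. (emeasure M (Pair a -` Q))\<^sup>2 \<partial>M)"
proof -
  let ?E = "{(a, b, c). (a, b) \<in> Q \<and> (a, c) \<in> Q}"
  have "?E = {t \<in> space (M \<Otimes>\<^sub>M M \<Otimes>\<^sub>M M). (fst t, fst (snd t)) \<in> Q \<and> (fst t, snd (snd t)) \<in> Q}"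
    using sets.sets_into_space[OF Q] by (auto simp: space_pair_measure)
  also have "\<dots> \<in> sets (M \<Otimes>\<^sub>M M \<Otimes>\<^sub>M M)" by measurable
  finally have E: "?E \<in> sets (M \<Otimes>\<^sub>M M \<Otimes>\<^sub>M M)" .
  have "emeasure (M \<Otimes>\<^sub>M M \<Otimes>\<^sub>M M) ?E = (\<integral>\<^sup>+a. emeasure (M \<Otimes>\<^sub>M M) (Pair a -` ?E) \<partial>M)"
    by (rule sigma_finite_measure.emeasure_pair_measure_alt[OF sigma_finite_measure_pair_self E])
  also have "\<dots> = (\<integral>\<^sup>+a. (emeasure M (Pair a -` Q))\<^sup>2 \<partial>M)"
  proof (intro nn_integral_cong)
    fix a
    have "Pair a -` ?E = Pair a -` Q \<times> Pair a -` Q" by auto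
    then show "emeasure (M \<Otimes>\<^sub>M M) (Pair a -` ?E) = (emeasure M (Pair a -` Q))\<^sup>2"
      by (simp add: emeasure_pair_measure_Times power2_eq_square)
  qed
  finally show ?thesis .
qed

lemma emeasure_triple_second_vertex:
  assumes Q[measurable]: "Q \<in> sets (M \<Otimes>\<^sub>M M)"
  shows "emeasure (M \<Otimes>\<^sub>M M \<Otimes>\<^sub>M M) {(a, b, c). (b, c) \<in> Q \<and> (b, a) \<in> Q} =
    (\<integral>\<^sup>+a. (emeasure M (Pair a -` Q))\<^sup>2 \<partial>M)"
proof -
  let ?E = "{(a, b, c). (b, c) \<in> Q \<and> (b, a) \<in> Q}"
  have "?E = {t \<in> space (M \<Otimes>\<^sub>M M \<Otimes>\<^sub>M M). (fst (snd t), snd (snd t)) \<in> Q \<and> (fst (snd t), fst t) \<in> Q}"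
    using sets.sets_into_space[OF Q] by (auto simp: space_pair_measure)
  also have "\<dots> \<in> sets (M \<Otimes>\<^sub>M M \<Otimes>\<^sub>M M)" by measurable
  finally have E: "?E \<in> sets (M \<Otimes>\<^sub>M M \<Otimes>\<^sub>M M)" .
  have "emeasure (M \<Otimes>\<^sub>M M \<Otimes>\<^sub>M M) ?E = (\<integral>\<^sup>+a. emeasure (M \<Otimes>\<^sub>M M) (Pair a -` ?E) \<partial>M)"
    by (rule sigma_finite_measure.emeasure_pair_measure_alt[OF sigma_finite_measure_pair_self E])
  also have "\<dots> = (\<integral>\<^sup>+a. \<integral>\<^sup>+x. indicator Q (x, a) * emeasure M (Pair x -` Q) \<partial>M \<partial>M)"
  proof (intro nn_integral_cong)
    fix a
    have "Pair a -` ?E \<in> sets (M \<Otimes>\<^sub>M M)"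
      using E by measurable
    then have "emeasure (M \<Otimes>\<^sub>M M) (Pair a -` ?E) = (\<integral>\<^sup>+x. emeasure M (Pair x -` Pair a -` ?E) \<partial>M)"
      by (rule emeasure_pair_measure_alt)
    also have "\<dots> = (\<integral>\<^sup>+x. indicator Q (x, a) * emeasure M (Pair x -` Q) \<partial>M)"
      by (intro nn_integral_cong) (auto simp: indicator_def vimage_def)
    finally show "emeasure (M \<Otimes>\<^sub>M M) (Pair a -` ?E) =
      (\<integral>\<^sup>+x. indicator Q (x, a) * emeasure M (Pair x -` Q) \<partial>M)" .
  qed
  finally show ?thesis by (simp add: nn_integral_section_measure_square)
qed

lemma emeasure_triple_third_vertex:
  assumes Q[measurable]: "Q \<in> sets (M \<Otimes>\<^sub>M M)"
  shows "emeasure (M \<Otimes>\<^sub>M M \<Otimes>\<^sub>M M) {(a, b, c). (c, a) \<in> Q \<and> (c, b) \<in> Q} =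
    (\<integral>\<^sup>+a. (emeasure M (Pair a -` Q))\<^sup>2 \<partial>M)"
proof -
  interpret MM: pair_sigma_finite M M ..
  let ?E = "{(a, b, c). (c, a) \<in> Q \<and> (c, b) \<in> Q}"
  have "?E = {t \<in> space (M \<Otimes>\<^sub>M M \<Otimes>\<^sub>M M). (snd (snd t), fst t) \<in> Q \<and> (snd (snd t), fst (snd t)) \<in> Q}"
    using sets.sets_into_space[OF Q] by (auto simp: space_pair_measure)
  also have "\<dots> \<in> sets (M \<Otimes>\<^sub>M M \<Otimes>\<^sub>M M)" by measurable
  finally have E: "?E \<in> sets (M \<Otimes>\<^sub>M M \<Otimes>\<^sub>M M)" .
  have "emeasure (M \<Otimes>\<^sub>M M \<Otimes>\<^sub>M M) ?E = (\<integral>\<^sup>+a. emeasure (M \<Otimes>\<^sub>M M) (Pair a -` ?E) \<partial>M)"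
    by (rule sigma_finite_measure.emeasure_pair_measure_alt[OF sigma_finite_measure_pair_self E])
  also have "\<dots> = (\<integral>\<^sup>+a. \<integral>\<^sup>+x. indicator Q (x, a) * emeasure M (Pair x -` Q) \<partial>M \<partial>M)"
  proof (intro nn_integral_cong)
    fix a
    have "Pair a -` ?E \<in> sets (M \<Otimes>\<^sub>M M)"
      using E by measurable
    then have "emeasure (M \<Otimes>\<^sub>M M) (Pair a -` ?E) = (\<integral>\<^sup>+x. emeasure M ((\<lambda>b. (b, x)) -` Pair a -` ?E) \<partial>M)"
      by (rule MM.emeasure_pair_measure_alt2)
    also have "\<dots> = (\<integral>\<^sup>+x. indicator Q (x, a) * emeasure M (Pair x -` Q) \<partial>M)"
      by (intro nn_integral_cong) (auto simp: indicator_def vimage_def)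
    finally show "emeasure (M \<Otimes>\<^sub>M M) (Pair a -` ?E) =
      (\<integral>\<^sup>+x. indicator Q (x, a) * emeasure M (Pair x -` Q) \<partial>M)" .
  qed
  finally show ?thesis by (simp add: nn_integral_section_measure_square)
qed

end


lemma line_in_null_sets_lborel:
  fixes a p :: "real \<times> real"
  assumes "a \<noteq> 0"
  shows "{b. cross2 a (b - p) = 0} \<in> null_sets lborel"
proof -
  define n where "n = (- snd a, fst a)"
  have "n \<noteq> 0" using assms by (cases a) (auto simp: n_def zero_prod_def)
  have "{b. cross2 a (b - p) = 0} = {b. n \<bullet> b = n \<bullet> p}"
    by (auto simp: n_def cross2_def inner_prod_def algebra_simps)
  then have "negligible {b. cross2 a (b - p) = 0}"
    using negligible_hyperplane[of n "n \<bullet> p"] \<open>n \<noteq> 0\<close> by simp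
  moreover have meas: "{b. cross2 a (b - p) = 0} \<in> sets borel"
  proof -
    have "{b. cross2 a (b - p) = 0} = {b \<in> space borel. cross2 a (b - p) = 0}" by simp
    also have "\<dots> \<in> sets borel" by measurable
    finally show ?thesis .
  qed
  ultimately show ?thesis
    using null_sets_completion_iff[OF meas[unfolded sets_lborel[symmetric]]]
    by (simp add: negligible_iff_null_sets)
qed

definition left_halfplane :: "real \<times> real \<Rightarrow> real \<times> real \<Rightarrow> (real \<times> real) set" where
  "left_halfplane p a = {b. 0 < cross2 (a - p) (b - p)}"

lemma sets_left_halfplane[measurable]: "left_halfplane p a \<in> sets borel"
proof -
  have "left_halfplane p a = {b \<in> space borel. 0 < cross2 (a - p) (b - p)}"
    by (simp add: left_halfplane_def)
  also have "\<dots> \<in> sets borel" by measurable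
  finally show ?thesis .
qed

lemma left_halfplane_asym: "b \<in> left_halfplane p a \<Longrightarrow> a \<notin> left_halfplane p b"
  by (simp add: left_halfplane_def cross2_anticomm[of "a - p"])

lemma not_mem_convex_hull_one_sided:
  assumes "b \<in> left_halfplane p a" "c \<in> left_halfplane p a"
  shows "p \<notin> convex hull {a, b, c}"
  unfolding mem_convex_hull_3_iff_translate[of p a b c]
  using assms by (intro zero_notin_convex_hull_one_sided) (simp_all add: left_halfplane_def)

lemma mem_convex_hull_not_one_sided:
  assumes "cross2 (a - p) (b - p) \<noteq> 0" "cross2 (b - p) (c - p) \<noteq> 0" "cross2 (c - p) (a - p) \<noteq> 0"
    and "\<not> (b \<in> left_halfplane p a \<and> c \<in> left_halfplane p a)"
    and "\<not> (c \<in> left_halfplane p b \<and> a \<in> left_halfplane p b)"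
    and "\<not> (a \<in> left_halfplane p c \<and> b \<in> left_halfplane p c)"
  shows "p \<in> convex hull {a, b, c}"
  unfolding mem_convex_hull_3_iff_translate[of p a b c]
  using assms by (intro zero_in_convex_hull_not_one_sided) (simp_all add: left_halfplane_def)

locale planar_ac_prob_space = prob_space M for M :: "(real \<times> real) measure" +
  assumes sets_eq_borel[measurable_cong]: "sets M = sets borel"
    and absolutely_continuous: "absolutely_continuous lborel M"
begin

lemma space_eq_UNIV[simp]: "space M = UNIV"
  using sets_eq_imp_space_eq[OF sets_eq_borel] by simp

lemma null_sets_lborel_imp_null: "B \<in> null_sets lborel \<Longrightarrow> B \<in> null_sets M"
  using absolutely_continuous by (auto simp: absolutely_continuous_def)

lemma measurable_emeasure_left_halfplane[measurable]:
  "(\<lambda>a. emeasure M (left_halfplane p a)) \<in> borel_measurable borel"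
proof -
  have "{x \<in> space (borel \<Otimes>\<^sub>M M). 0 < cross2 (fst x - p) (snd x - p)} \<in> sets (borel \<Otimes>\<^sub>M M)"
    by measurable
  from measurable_emeasure_Pair[OF this] show ?thesis
    by (simp add: left_halfplane_def vimage_def space_pair_measure)
qed

lemma AE_cross2_nonzero: "AE a in M. AE b in M. cross2 (a - p) (b - p) \<noteq> 0"
proof -
  have "{p} \<subseteq> {b. cross2 (1, 0) (b - p) = 0}" by (simp add: cross2_def)
  then have "AE a in M. a \<noteq> p"
    by (intro AE_I'[OF null_sets_lborel_imp_null[OF line_in_null_sets_lborel[of "(1, 0)" p]]])
      (auto simp: zero_prod_def)
  then show ?thesis
  proof eventually_elim
    case (elim a)
    then show ?case
      by (intro AE_I'[OF null_sets_lborel_imp_null[OF line_in_null_sets_lborel[of "a - p" p]]]) auto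
  qed
qed

lemma AE_nondegenerate_triple:
  "AE t in M \<Otimes>\<^sub>M M \<Otimes>\<^sub>M M. cross2 (fst t - p) (fst (snd t) - p) \<noteq> 0 \<and>
     cross2 (fst (snd t) - p) (snd (snd t) - p) \<noteq> 0 \<and> cross2 (snd (snd t) - p) (fst t - p) \<noteq> 0"
proof -
  interpret MM: pair_sigma_finite M M ..
  interpret M3: pair_sigma_finite M "M \<Otimes>\<^sub>M M"
    by (intro pair_sigma_finite.intro sigma_finite_measure_axioms sigma_finite_measure_pair_self)
  have "AE a in M. AE b in M. AE c in M.
      cross2 (a - p) (b - p) \<noteq> 0 \<and> cross2 (b - p) (c - p) \<noteq> 0 \<and> cross2 (c - p) (a - p) \<noteq> 0"
    using AE_cross2_nonzero[of p]
  proof eventually_elim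
    case (elim a)
    with AE_cross2_nonzero[of p] show ?case
    proof eventually_elim
      case (elim b)
      have "AE c in M. cross2 (b - p) (c - p) \<noteq> 0 \<and> cross2 (c - p) (a - p) \<noteq> 0"
        using \<open>AE c in M. cross2 (a - p) (c - p) \<noteq> 0\<close> elim(1)
        by eventually_elim (simp add: cross2_anticomm[of _ "a - p"])
      with elim(2) show ?case by simp
    qed
  qed
  then have nondeg: "AE a in M. AE bc in M \<Otimes>\<^sub>M M. cross2 (a - p) (fst bc - p) \<noteq> 0 \<and>
      cross2 (fst bc - p) (snd bc - p) \<noteq> 0 \<and> cross2 (snd bc - p) (a - p) \<noteq> 0"
    by eventually_elim (intro MM.AE_pair_measure; simp; measurable)
  show ?thesis
    by (intro M3.AE_pair_measure) (measurable, use nondeg in simp)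
qed

lemma AE_in_triangle_or_one_sided:
  "AE (a, b, c) in M \<Otimes>\<^sub>M M \<Otimes>\<^sub>M M. p \<in> convex hull {a, b, c} \<or>
     (b \<in> left_halfplane p a \<and> c \<in> left_halfplane p a) \<or>
     (c \<in> left_halfplane p b \<and> a \<in> left_halfplane p b) \<or>
     (a \<in> left_halfplane p c \<and> b \<in> left_halfplane p c)"
  using AE_nondegenerate_triple[of p]
proof eventually_elim
  case (elim t)
  obtain a b c where "t = (a, b, c)" by (cases t) auto
  with elim show ?case using mem_convex_hull_not_one_sided[of a p b c] by auto
qed

lemma sets_triple_eq_borel: "sets (M \<Otimes>\<^sub>M M \<Otimes>\<^sub>M M) = sets borel"
proof -
  have "sets (M \<Otimes>\<^sub>M M \<Otimes>\<^sub>M M) = sets (borel \<Otimes>\<^sub>M (borel \<Otimes>\<^sub>M borel) ::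
      ((real \<times> real) \<times> (real \<times> real) \<times> (real \<times> real)) measure)"
    by (intro sets_pair_measure_cong) (simp_all add: sets_eq_borel)
  then show ?thesis by (simp only: borel_prod)
qed

lemma measure_triangle_contains_point:
  "measure (M \<Otimes>\<^sub>M M \<Otimes>\<^sub>M M) {(a, b, c). p \<in> convex hull {a, b, c}} =
     1 - 3 * enn2real (\<integral>\<^sup>+a. (emeasure M (left_halfplane p a))\<^sup>2 \<partial>M)"
proof -
  interpret P3: prob_space "M \<Otimes>\<^sub>M M \<Otimes>\<^sub>M M" by (intro prob_space_pair prob_space_axioms)
  define Q where "Q = {(a, b). b \<in> left_halfplane p a}"
  have "Q = {x \<in> space (M \<Otimes>\<^sub>M M). 0 < cross2 (fst x - p) (snd x - p)}"
    by (auto simp: Q_def left_halfplane_def space_pair_measure)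
  also have "\<dots> \<in> sets (M \<Otimes>\<^sub>M M)" by measurable
  finally have Q[measurable]: "Q \<in> sets (M \<Otimes>\<^sub>M M)" .
  have sections: "Pair a -` Q = left_halfplane p a" for a by (auto simp: Q_def)
  define I where "I = (\<integral>\<^sup>+a. (emeasure M (left_halfplane p a))\<^sup>2 \<partial>M)"
  define T where "T = {(a, b, c). p \<in> convex hull {a, b, c}}"
  define E1 where "E1 = {(a, b, c). (a, b) \<in> Q \<and> (a, c) \<in> Q}"
  define E2 where "E2 = {(a, b, c). (b, c) \<in> Q \<and> (b, a) \<in> Q}"
  define E3 where "E3 = {(a, b, c). (c, a) \<in> Q \<and> (c, b) \<in> Q}"
  have E: "emeasure (M \<Otimes>\<^sub>M M \<Otimes>\<^sub>M M) E1 = I" "emeasure (M \<Otimes>\<^sub>M M \<Otimes>\<^sub>M M) E2 = I"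
    "emeasure (M \<Otimes>\<^sub>M M \<Otimes>\<^sub>M M) E3 = I"
    unfolding I_def E1_def E2_def E3_def sections[symmetric]
    using emeasure_triple_first_vertex[OF Q] emeasure_triple_second_vertex[OF Q]
      emeasure_triple_third_vertex[OF Q] by simp_all
  have E_eqs: "E1 = {t \<in> space (M \<Otimes>\<^sub>M M \<Otimes>\<^sub>M M). (fst t, fst (snd t)) \<in> Q \<and> (fst t, snd (snd t)) \<in> Q}"
    "E2 = {t \<in> space (M \<Otimes>\<^sub>M M \<Otimes>\<^sub>M M). (fst (snd t), snd (snd t)) \<in> Q \<and> (fst (snd t), fst t) \<in> Q}"
    "E3 = {t \<in> space (M \<Otimes>\<^sub>M M \<Otimes>\<^sub>M M). (snd (snd t), fst t) \<in> Q \<and> (snd (snd t), fst (snd t)) \<in> Q}"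
    by (auto simp: E1_def E2_def E3_def space_pair_measure)
  have E_sets: "E1 \<in> P3.events" "E2 \<in> P3.events" "E3 \<in> P3.events"
    unfolding E_eqs by measurable
  have "T = {t. p \<in> convex hull {fst t, fst (snd t), snd (snd t)}}" by (auto simp: T_def)
  then have T_sets: "T \<in> P3.events"
    using closed_triples_with_p_in_convex_hull[of p] by (simp add: sets_triple_eq_borel)
  have outside: "T \<inter> (E1 \<union> E2 \<union> E3) = {}"
    unfolding T_def E1_def E2_def E3_def Q_def
    by (auto dest: not_mem_convex_hull_one_sided simp: insert_commute)
  have disjoint: "E1 \<inter> E2 = {}" "(E1 \<union> E2) \<inter> E3 = {}"
    unfolding E1_def E2_def E3_def Q_def by (auto dest: left_halfplane_asym)
  have "AE t in M \<Otimes>\<^sub>M M \<Otimes>\<^sub>M M. t \<in> T \<union> E1 \<union> E2 \<union> E3"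
    using AE_in_triangle_or_one_sided[of p]
    by eventually_elim (auto simp: T_def E1_def E2_def E3_def Q_def)
  then have "P3.prob (T \<union> (E1 \<union> E2 \<union> E3)) = 1"
    using T_sets E_sets by (subst P3.prob_eq_1) (auto simp: Un_assoc)
  also have "P3.prob (T \<union> (E1 \<union> E2 \<union> E3)) = P3.prob T + P3.prob (E1 \<union> E2 \<union> E3)"
    using T_sets E_sets outside by (intro P3.finite_measure_Union) auto
  also have "P3.prob (E1 \<union> E2 \<union> E3) = P3.prob E1 + P3.prob E2 + P3.prob E3"
    using E_sets disjoint by (simp add: P3.finite_measure_Union)
  also have "P3.prob E1 + P3.prob E2 + P3.prob E3 = 3 * enn2real I"
    by (simp add: measure_def E)
  finally show ?thesis unfolding T_def I_def by simp
qed

end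


section \<open>Star-shaped regions in polar coordinates\<close>

locale polar_star_region =
  fixes r :: "real \<Rightarrow> real" and p0 :: "real \<times> real"
  assumes r_pos: "\<And>\<theta>. r \<theta> > 0"
    and r_periodic: "\<And>\<theta>. r (\<theta> + 2*pi) = r \<theta>"
    and r_continuous: "continuous_on UNIV r"
    and area: "emeasure lborel (polar_region r p0) = 1"
begin

abbreviation "R \<equiv> polar_region r p0"

definition sector_density :: "real \<Rightarrow> real" where
  "sector_density \<theta> = (r \<theta>)\<^sup>2 / 2"

lemma sector_density_continuous: "continuous_on S sector_density"
  unfolding sector_density_def by (intro continuous_intros continuous_on_subset[OF r_continuous]) auto

lemma sector_density_nonneg: "sector_density \<theta> \<ge> 0"
  by (simp add: sector_density_def)

lemma sector_density_periodic: "sector_density (\<theta> + 2*pi) = sector_density \<theta>"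
  by (simp add: sector_density_def r_periodic)

lemma half_area_eq_integral: "half_area r \<theta> = integral {\<theta>..\<theta>+pi} sector_density"
  unfolding half_area_def sector_density_def by (simp add: integral_divide)

lemma mem_polar_region_iff:
  assumes "t > 0"
  shows "p0 + (t * cos \<theta>, t * sin \<theta>) \<in> R \<longleftrightarrow> t \<le> r \<theta>"
proof
  assume "p0 + (t * cos \<theta>, t * sin \<theta>) \<in> R"
  then obtain s \<phi> where s: "0 \<le> s" "s \<le> r \<phi>"
    and eq: "t * cos \<theta> = s * cos \<phi>" "t * sin \<theta> = s * sin \<phi>"
    unfolding polar_region_def by auto
  have "(t * cos \<theta>)\<^sup>2 + (t * sin \<theta>)\<^sup>2 = (s * cos \<phi>)\<^sup>2 + (s * sin \<phi>)\<^sup>2" using eq by simp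
  then have "t\<^sup>2 = s\<^sup>2" by (simp add: power_mult_distrib flip: distrib_left)
  then have "t = s" using assms s by (simp add: power2_eq_iff_nonneg)
  then have "cos \<theta> = cos \<phi>" "sin \<theta> = sin \<phi>" using eq assms by auto
  then obtain k where "\<theta> = \<phi> + 2*pi * of_int k" using sin_cos_eq_iff by blast
  then show "t \<le> r \<theta>"
    using s \<open>t = s\<close> periodic_2pi_int[of r, OF r_periodic] by simp
next
  assume le: "t \<le> r \<theta>"
  obtain \<phi> k where \<phi>: "\<phi> \<in> {0..2*pi}" and \<theta>: "\<theta> = \<phi> + 2*pi * of_int k"
    using angle_mod_2pi by blast
  have "cos \<theta> = cos \<phi>" "sin \<theta> = sin \<phi>" "r \<theta> = r \<phi>"
    unfolding \<theta> using sin_cos_eq_iff periodic_2pi_int[of r, OF r_periodic] by auto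
  then show "p0 + (t * cos \<theta>, t * sin \<theta>) \<in> R"
    unfolding polar_region_def using \<phi> le assms by force
qed

lemma compact_polar_region: "compact R"
proof -
  obtain B where B: "\<And>\<theta>. \<theta> \<in> {0..2*pi} \<Longrightarrow> r \<theta> \<le> B"
    using compact_attains_sup[OF compact_continuous_image[OF continuous_on_subset[OF r_continuous]],
        of "{0..2*pi}"] by fastforce
  define S where "S = {z :: real \<times> real. 0 \<le> snd z \<and> snd z \<le> 2*pi \<and> 0 \<le> fst z \<and> fst z \<le> r (snd z)}"
  have "closed S" unfolding S_def
    by (intro closed_Collect_conj closed_Collect_le continuous_intros
        continuous_on_compose2[OF r_continuous]) auto
  moreover have "S \<subseteq> cbox (0, 0) (B, 2*pi)"
    using B unfolding S_def by (force simp: cbox_Pair_iff)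
  ultimately have "compact S" using bounded_cbox bounded_subset compact_eq_bounded_closed by blast
  moreover have "continuous_on S (\<lambda>z. p0 + (fst z * cos (snd z), fst z * sin (snd z)))"
    by (intro continuous_intros)
  moreover have "R = (\<lambda>z. p0 + (fst z * cos (snd z), fst z * sin (snd z))) ` S"
  proof (intro set_eqI iffI)
    fix x assume "x \<in> R"
    then obtain t \<theta> where "x = p0 + (t * cos \<theta>, t * sin \<theta>)" "0 \<le> \<theta>" "\<theta> \<le> 2 * pi" "0 \<le> t" "t \<le> r \<theta>"
      unfolding polar_region_def by blast
    then show "x \<in> (\<lambda>z. p0 + (fst z * cos (snd z), fst z * sin (snd z))) ` S"
      unfolding S_def by (intro image_eqI[where x="(t, \<theta>)"]) auto
  qed (auto simp: polar_region_def S_def)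
  ultimately show ?thesis by (simp add: compact_continuous_image)
qed


lemma sets_polar_region[measurable]: "R \<in> sets borel"
  using compact_polar_region by (simp add: borel_compact)

lemma radial_integral_polar_region:
  assumes "\<And>t. t > 0 \<Longrightarrow> G (p0 + (t * cos \<theta>, t * sin \<theta>)) = c"
  shows "radial_integral (\<lambda>x. indicator R x * G x) p0 \<theta> = ennreal (sector_density \<theta>) * c"
  unfolding sector_density_def
  by (rule radial_integral_indicator_ray)
    (auto simp: less_imp_le[OF r_pos] assms mem_polar_region_iff indicator_def)

lemma emeasure_polar_region_window:
  "emeasure lborel R = (\<integral>\<^sup>+\<theta>. indicator {a<..<a+2*pi} \<theta> * ennreal (sector_density \<theta>) \<partial>lborel)"
proof -
  have "emeasure lborel R = (\<integral>\<^sup>+x. indicator R x * 1 \<partial>lborel)" by simp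
  also have "\<dots> = (\<integral>\<^sup>+\<theta>. indicator {a<..<a+2*pi} \<theta> * ennreal (sector_density \<theta>) \<partial>lborel)"
    by (subst nn_integral_polar[where a=a and p=p0])
      (simp_all add: radial_integral_polar_region[of "\<lambda>_. 1", simplified])
  finally show ?thesis .
qed

lemma integral_sector_density_period: "integral {a..a+2*pi} sector_density = 1"
proof -
  have "ennreal (integral {a..a+2*pi} sector_density) = 1"
    using area emeasure_polar_region_window[of a]
      nn_integral_Ioo_eq_integral[OF sector_density_continuous sector_density_nonneg] by simp
  moreover have "integral {a..a+2*pi} sector_density \<ge> 0"
    by (intro integral_nonneg integrable_continuous_interval sector_density_continuous sector_density_nonneg)
  ultimately show ?thesis by simp
qed

lemma half_area_continuous: "continuous_on UNIV (half_area r)"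
  unfolding half_area_eq_integral
proof (intro continuous_at_imp_continuous_on ballI)
  show "isCont (\<lambda>\<theta>. integral {\<theta>..\<theta>+pi} sector_density) x" for x
    by (rule DERIV_isCont[OF has_real_derivative_integral_window[OF sector_density_continuous]]) simp
qed

lemma half_area_nonneg: "half_area r \<theta> \<ge> 0"
  unfolding half_area_eq_integral
  by (intro integral_nonneg integrable_continuous_interval sector_density_continuous sector_density_nonneg)

lemma half_area_periodic: "half_area r (\<theta> + 2*pi) = half_area r \<theta>"
  using integral_shift_Icc_real[of \<theta> "\<theta>+pi" sector_density "2*pi"]
  by (simp add: half_area_eq_integral o_def sector_density_periodic add_ac)

abbreviation "U \<equiv> uniform_measure lborel R"

sublocale uniform: planar_ac_prob_space U
proof (intro planar_ac_prob_space.intro planar_ac_prob_space_axioms.intro)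
  show "prob_space U" using area by (intro prob_space_uniform_measure) simp_all
  show "sets U = sets borel" by simp
  show "absolutely_continuous lborel U"
    unfolding uniform_measure_def by (intro absolutely_continuousI_density) simp
qed

lemma emeasure_uniform: "B \<in> sets borel \<Longrightarrow> emeasure U B = emeasure lborel (R \<inter> B)"
  using area emeasure_uniform_measure[of R lborel B] by (simp add: divide_ennreal_def)

lemma nn_integral_uniform:
  "g \<in> borel_measurable borel \<Longrightarrow> (\<integral>\<^sup>+x. g x \<partial>U) = (\<integral>\<^sup>+x. indicator R x * g x \<partial>lborel)"
  using nn_integral_uniform_measure[of g lborel R] area by (simp add: mult.commute divide_ennreal_def)

lemma emeasure_left_halfplane_polar:
  assumes "s > 0"
  shows "emeasure U (left_halfplane p0 (p0 + (s * cos \<alpha>, s * sin \<alpha>))) = ennreal (half_area r \<alpha>)"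
proof -
  let ?L = "left_halfplane p0 (p0 + (s * cos \<alpha>, s * sin \<alpha>))"
  have side: "p0 + (t * cos \<theta>, t * sin \<theta>) \<in> ?L \<longleftrightarrow> sin (\<theta> - \<alpha>) > 0" if "t > 0" for t \<theta>
  proof -
    show ?thesis using \<open>s > 0\<close> that
      by (simp add: left_halfplane_def cross2_polar zero_less_mult_iff mult_less_0_iff)
  qed
  have "emeasure U ?L = (\<integral>\<^sup>+x. indicator R x * indicator ?L x \<partial>lborel)"
    by (simp add: emeasure_uniform indicator_inter_arith[symmetric] del: emeasure_uniform_measure)
  also have "\<dots> = (\<integral>\<^sup>+\<theta>. indicator {\<alpha><..<\<alpha>+2*pi} \<theta> *
      (ennreal (sector_density \<theta>) * indicator {\<theta>. sin (\<theta> - \<alpha>) > 0} \<theta>) \<partial>lborel)"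
  proof (subst nn_integral_polar[where a=\<alpha> and p=p0], simp, intro nn_integral_cong)
    fix \<theta>
    have "radial_integral (\<lambda>x. indicator R x * indicator ?L x) p0 \<theta> =
        ennreal (sector_density \<theta>) * indicator {\<theta>. sin (\<theta> - \<alpha>) > 0} \<theta>"
      by (rule radial_integral_polar_region) (simp add: side indicator_def)
    then show "indicator {\<alpha><..<\<alpha>+2*pi} \<theta> * radial_integral (\<lambda>x. indicator R x * indicator ?L x) p0 \<theta> =
        indicator {\<alpha><..<\<alpha>+2*pi} \<theta> * (ennreal (sector_density \<theta>) * indicator {\<theta>. sin (\<theta> - \<alpha>) > 0} \<theta>)"
      by simp
  qed
  also have "\<dots> = (\<integral>\<^sup>+\<theta>. indicator {\<alpha><..<\<alpha>+pi} \<theta> * ennreal (sector_density \<theta>) \<partial>lborel)"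
  proof (intro nn_integral_cong_AE eventually_mono[OF AE_lborel_singleton[of "\<alpha>+pi"]] impI)
    fix \<theta> assume "\<theta> \<noteq> \<alpha> + pi"
    then have "\<theta> \<in> {\<alpha><..<\<alpha>+2*pi} \<Longrightarrow> sin (\<theta> - \<alpha>) > 0 \<longleftrightarrow> \<theta> \<in> {\<alpha><..<\<alpha>+pi}"
      using sin_gt_zero[of "\<theta> - \<alpha>"] sin_lt_zero[of "\<theta> - \<alpha>"] by force
    then show "indicator {\<alpha><..<\<alpha>+2*pi} \<theta> * (ennreal (sector_density \<theta>) * indicator {\<theta>. sin (\<theta> - \<alpha>) > 0} \<theta>) =
        indicator {\<alpha><..<\<alpha>+pi} \<theta> * ennreal (sector_density \<theta>)"
      by (auto simp: indicator_def)
  qed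
  also have "\<dots> = ennreal (half_area r \<alpha>)"
    unfolding half_area_eq_integral
    by (rule nn_integral_Ioo_eq_integral[OF sector_density_continuous sector_density_nonneg])
  finally show ?thesis .
qed

lemma nn_integral_left_halfplane_square:
  "(\<integral>\<^sup>+a. (emeasure U (left_halfplane p0 a))\<^sup>2 \<partial>U) =
    ennreal (integral {\<theta>..\<theta>+2*pi} (\<lambda>\<phi>. sector_density \<phi> * (half_area r \<phi>)\<^sup>2))"
proof -
  have "(\<integral>\<^sup>+a. (emeasure U (left_halfplane p0 a))\<^sup>2 \<partial>U) =
      (\<integral>\<^sup>+x. indicator R x * (emeasure U (left_halfplane p0 x))\<^sup>2 \<partial>lborel)"
    by (rule nn_integral_uniform) measurable
  also have "\<dots> = (\<integral>\<^sup>+\<phi>. indicator {\<theta><..<\<theta>+2*pi} \<phi> * ennreal (sector_density \<phi> * (half_area r \<phi>)\<^sup>2) \<partial>lborel)"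
    by (subst nn_integral_polar[where a=\<theta> and p=p0], measurable, intro nn_integral_cong)
      (simp add: radial_integral_polar_region emeasure_left_halfplane_polar ennreal_mult'
        ennreal_power sector_density_nonneg half_area_nonneg del: emeasure_uniform_measure)
  also have "\<dots> = ennreal (integral {\<theta>..\<theta>+2*pi} (\<lambda>\<phi>. sector_density \<phi> * (half_area r \<phi>)\<^sup>2))"
    by (intro nn_integral_Ioo_eq_integral continuous_intros sector_density_continuous
        continuous_on_subset[OF half_area_continuous] mult_nonneg_nonneg sector_density_nonneg) auto
  finally show ?thesis .
qed

end

section \<open>Integrals of the half-mass function\<close>

lemma periodic_continuous_attains_global_min:
  fixes H :: "real \<Rightarrow> real"
  assumes "continuous_on UNIV H" and periodic: "\<And>\<theta>. H (\<theta> + 2*pi) = H \<theta>"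
  obtains \<theta>\<^sub>0 where "\<theta>\<^sub>0 \<in> {0..2*pi}" "(INF \<theta>\<in>{0..2*pi}. H \<theta>) = H \<theta>\<^sub>0" "\<And>\<theta>. H \<theta>\<^sub>0 \<le> H \<theta>"
proof -
  obtain \<theta>\<^sub>0 where \<theta>\<^sub>0: "\<theta>\<^sub>0 \<in> {0..2*pi}" and min: "\<And>\<phi>. \<phi> \<in> {0..2*pi} \<Longrightarrow> H \<theta>\<^sub>0 \<le> H \<phi>"
    using continuous_attains_inf[of "{0..2*pi}" H] continuous_on_subset[OF assms(1)] by auto
  have "H \<theta>\<^sub>0 \<le> H \<theta>" for \<theta>
  proof -
    obtain \<phi> k where "\<phi> \<in> {0..2*pi}" "\<theta> = \<phi> + 2*pi * of_int k" using angle_mod_2pi by blast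
    then show ?thesis using min periodic_2pi_int[of H, OF periodic] by simp
  qed
  moreover have "(INF \<theta>\<in>{0..2*pi}. H \<theta>) = H \<theta>\<^sub>0"
    using \<theta>\<^sub>0 min by (intro cInf_eq_minimum) auto
  ultimately show thesis using that \<theta>\<^sub>0 by blast
qed

locale unit_mass_density =
  fixes f :: "real \<Rightarrow> real" and c :: real
  assumes continuous: "continuous_on UNIV f"
    and nonneg: "\<And>\<theta>. f \<theta> \<ge> 0"
    and c_nonneg: "c \<ge> 0"
    and total: "\<And>\<theta>. integral {\<theta>..\<theta>+2*c} f = 1"
begin

definition half_mass :: "real \<Rightarrow> real" where
  "half_mass \<theta> = integral {\<theta>..\<theta>+c} f"

lemma half_mass_has_derivative: "(half_mass has_real_derivative f (\<theta> + c) - f \<theta>) (at \<theta>)"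
  unfolding half_mass_def[abs_def] using continuous c_nonneg by (rule has_real_derivative_integral_window)

lemma half_mass_continuous: "continuous_on S half_mass"
  by (intro continuous_at_imp_continuous_on ballI DERIV_isCont[OF half_mass_has_derivative])

lemma half_mass_shift: "half_mass (\<theta> + c) = 1 - half_mass \<theta>"
proof -
  have "integral {\<theta>..\<theta>+c} f + integral {\<theta>+c..\<theta>+c+c} f = integral {\<theta>..\<theta>+c+c} f"
    using c_nonneg
    by (intro Henstock_Kurzweil_Integration.integral_combine integrable_continuous_interval
        continuous_on_subset[OF continuous]) auto
  moreover have "\<theta> + c + c = \<theta> + 2*c" by simp
  ultimately show ?thesis using total[of \<theta>] unfolding half_mass_def by (simp only:)
qed

lemma integral_weighted_half_mass_square:
  "integral {\<theta>..\<theta>+2*c} (\<lambda>\<phi>. f \<phi> * (half_mass \<phi>)\<^sup>2) =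
     integral {\<theta>..\<theta>+c} (\<lambda>\<phi>. f \<phi> * ((half_mass \<phi>)\<^sup>2 + (1 - half_mass \<phi>)\<^sup>2)) +
     ((1 - half_mass \<theta>)^3 - (half_mass \<theta>)^3) / 3"
proof -
  let ?g = "\<lambda>\<phi>. f \<phi> * (half_mass \<phi>)\<^sup>2"
  let ?p = "\<lambda>\<phi>. f \<phi> * ((half_mass \<phi>)\<^sup>2 + (1 - half_mass \<phi>)\<^sup>2)"
  let ?q = "\<lambda>\<phi>. (1 - half_mass \<phi>)\<^sup>2 * (f (\<phi> + c) - f \<phi>)"
  have cont_shift: "continuous_on S (\<lambda>\<phi>. f (\<phi> + c))" for S
    by (rule continuous_on_compose2[OF continuous]) (auto intro!: continuous_intros)
  have cont_f: "continuous_on S f" for S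
    using continuous_on_subset[OF continuous] by blast
  note cont = cont_f cont_shift half_mass_continuous
  have "\<theta> + 2*c = \<theta> + c + c" by simp
  then have "integral {\<theta>..\<theta>+2*c} ?g = integral {\<theta>..\<theta>+c+c} ?g" by (simp only:)
  also have "\<dots> = integral {\<theta>..\<theta>+c} ?g + integral {\<theta>+c..\<theta>+c+c} ?g"
    using c_nonneg
    by (intro Henstock_Kurzweil_Integration.integral_combine[symmetric] integrable_continuous_interval
        continuous_intros cont) auto
  \<comment> \<open>move the second half back by \<open>c\<close>, where \<open>half_mass\<close> turns into \<open>1 - half_mass\<close>\<close>
  also have "integral {\<theta>+c..\<theta>+c+c} ?g = integral {\<theta>..\<theta>+c} (\<lambda>\<phi>. f (\<phi> + c) * (1 - half_mass \<phi>)\<^sup>2)"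
    using integral_shift_Icc_real[of \<theta> "\<theta>+c" ?g c] by (simp add: o_def half_mass_shift add_ac)
  also have "integral {\<theta>..\<theta>+c} ?g + \<dots> = integral {\<theta>..\<theta>+c} (\<lambda>\<phi>. ?p \<phi> + ?q \<phi>)"
    by (subst integral_add[symmetric])
      (auto intro!: integrable_continuous_interval continuous_intros cont integral_cong
        simp: algebra_simps)
  also have "\<dots> = integral {\<theta>..\<theta>+c} ?p + integral {\<theta>..\<theta>+c} ?q"
    by (intro integral_add integrable_continuous_interval continuous_intros cont)
  also have "integral {\<theta>..\<theta>+c} ?q = ((1 - half_mass \<theta>)^3 - (half_mass \<theta>)^3) / 3"
  proof -
    let ?G = "\<lambda>\<phi>. - ((1 - half_mass \<phi>)^3) / 3"
    have "(?G has_real_derivative ?q \<phi>) (at \<phi>)" for \<phi>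
      by (auto intro!: derivative_eq_intros half_mass_has_derivative
          simp: power2_eq_square power3_eq_cube field_simps)
    then have "(?q has_integral (?G (\<theta> + c) - ?G \<theta>)) {\<theta>..\<theta>+c}"
      using c_nonneg
      by (intro fundamental_theorem_of_calculus)
        (auto simp: has_real_derivative_iff_has_vector_derivative[symmetric] intro: has_field_derivative_at_within)
    then show ?thesis by (simp add: integral_unique half_mass_shift field_simps)
  qed
  finally show ?thesis .
qed


lemma integral_weighted_half_mass_square_bounds:
  assumes min: "\<And>\<theta>. half_mass \<theta>\<^sub>0 \<le> half_mass \<theta>"
  defines "h \<equiv> half_mass \<theta>\<^sub>0"
  shows "h / 2 + ((1 - h)^3 - h^3) / 3 \<le> integral {\<theta>\<^sub>0..\<theta>\<^sub>0+2*c} (\<lambda>\<phi>. f \<phi> * (half_mass \<phi>)\<^sup>2)"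
    and "integral {\<theta>\<^sub>0..\<theta>\<^sub>0+2*c} (\<lambda>\<phi>. f \<phi> * (half_mass \<phi>)\<^sup>2) \<le> h * (h\<^sup>2 + (1 - h)\<^sup>2) + ((1 - h)^3 - h^3) / 3"
proof -
  let ?p = "\<lambda>\<phi>. f \<phi> * ((half_mass \<phi>)\<^sup>2 + (1 - half_mass \<phi>)\<^sup>2)"
  have range: "h \<le> half_mass \<phi>" "half_mass \<phi> \<le> 1 - h" for \<phi>
    using min[of \<phi>] min[of "\<phi> - c"] half_mass_shift[of "\<phi> - c"] unfolding h_def by auto
  have int_f: "f integrable_on {\<theta>\<^sub>0..\<theta>\<^sub>0+c}"
    by (intro integrable_continuous_interval continuous_on_subset[OF continuous]) simp
  have int_p: "?p integrable_on {\<theta>\<^sub>0..\<theta>\<^sub>0+c}"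
    by (intro integrable_continuous_interval continuous_intros continuous_on_subset[OF continuous]
        half_mass_continuous) simp
  have "integral {\<theta>\<^sub>0..\<theta>\<^sub>0+c} (\<lambda>\<phi>. f \<phi> * (1/2)) \<le> integral {\<theta>\<^sub>0..\<theta>\<^sub>0+c} ?p"
  proof (intro integral_le integrable_on_mult_left int_f int_p mult_left_mono nonneg)
    show "1/2 \<le> (half_mass \<phi>)\<^sup>2 + (1 - half_mass \<phi>)\<^sup>2" for \<phi>
      using power2_eq_square[of "half_mass \<phi> - 1/2"] zero_le_power2[of "half_mass \<phi> - 1/2"]
      by (simp add: power2_eq_square algebra_simps)
  qed
  moreover have "integral {\<theta>\<^sub>0..\<theta>\<^sub>0+c} ?p \<le> integral {\<theta>\<^sub>0..\<theta>\<^sub>0+c} (\<lambda>\<phi>. f \<phi> * (h\<^sup>2 + (1 - h)\<^sup>2))"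
  proof (intro integral_le integrable_on_mult_left int_f int_p mult_left_mono nonneg)
    \<comment> \<open>\<open>x\<^sup>2 + (1 - x)\<^sup>2\<close> is convex and symmetric about \<open>1/2\<close>, so it is largest at the ends of \<open>[h, 1 - h]\<close>\<close>
    fix \<phi>
    have "(half_mass \<phi> - h) * (half_mass \<phi> - (1 - h)) \<le> 0"
      using range[of \<phi>] by (intro mult_nonneg_nonpos) auto
    then show "(half_mass \<phi>)\<^sup>2 + (1 - half_mass \<phi>)\<^sup>2 \<le> h\<^sup>2 + (1 - h)\<^sup>2"
      by (simp add: power2_eq_square algebra_simps)
  qed
  moreover have "integral {\<theta>\<^sub>0..\<theta>\<^sub>0+c} f = h" by (simp add: h_def half_mass_def)
  ultimately show "h / 2 + ((1 - h)^3 - h^3) / 3 \<le> integral {\<theta>\<^sub>0..\<theta>\<^sub>0+2*c} (\<lambda>\<phi>. f \<phi> * (half_mass \<phi>)\<^sup>2)"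
    and "integral {\<theta>\<^sub>0..\<theta>\<^sub>0+2*c} (\<lambda>\<phi>. f \<phi> * (half_mass \<phi>)\<^sup>2) \<le> h * (h\<^sup>2 + (1 - h)\<^sup>2) + ((1 - h)^3 - h^3) / 3"
    unfolding integral_weighted_half_mass_square h_def by (simp_all add: mult.commute)
qed

end

sublocale polar_star_region \<subseteq> sector: unit_mass_density sector_density pi
  by unfold_locales
    (simp_all add: sector_density_continuous sector_density_nonneg integral_sector_density_period)

lemma (in polar_star_region) half_mass_eq_half_area: "sector.half_mass \<theta> = half_area r \<theta>"
  by (simp add: sector.half_mass_def half_area_eq_integral)

theorem theorem3p3:
  fixes r :: "real \<Rightarrow> real" and p0 :: "real \<times> real"
  assumes pos: "\<And>\<theta>. r \<theta> > 0"
    and periodic: "\<And>\<theta>. r (\<theta> + 2 * pi) = r \<theta>"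
    and cont: "continuous_on UNIV r"
    and pwd: "r piecewise_differentiable_on {0..2 * pi}"
    and interior: "p0 \<in> interior (polar_region r p0)"
    and area: "emeasure lborel (polar_region r p0) = 1"
  shows "1/4 - (1 + 4 * (INF \<theta>\<in>{0..2*pi}. half_area r \<theta>)) * (1/2 - (INF \<theta>\<in>{0..2*pi}. half_area r \<theta>))\<^sup>2
           \<le> triangle_prob (polar_region r p0) p0
       \<and> triangle_prob (polar_region r p0) p0
           \<le> 1/4 - 2 * (1/2 - (INF \<theta>\<in>{0..2*pi}. half_area r \<theta>)) ^ 3"
proof -
  interpret polar_star_region r p0 using pos periodic cont area by unfold_locales
  obtain \<theta>\<^sub>0 where inf: "(INF \<theta>\<in>{0..2*pi}. half_area r \<theta>) = half_area r \<theta>\<^sub>0"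
    and min: "\<And>\<theta>. half_area r \<theta>\<^sub>0 \<le> half_area r \<theta>"
    using periodic_continuous_attains_global_min[OF half_area_continuous half_area_periodic] by blast
  define h where "h = half_area r \<theta>\<^sub>0"
  define J where "J = integral {\<theta>\<^sub>0..\<theta>\<^sub>0+2*pi} (\<lambda>\<phi>. sector_density \<phi> * (half_area r \<phi>)\<^sup>2)"
  have "J \<ge> 0" unfolding J_def
    by (intro integral_nonneg integrable_continuous_interval continuous_intros sector_density_continuous
        continuous_on_subset[OF half_area_continuous] mult_nonneg_nonneg sector_density_nonneg) auto
  then have prob: "triangle_prob R p0 = 1 - 3 * J"
    using uniform.measure_triangle_contains_point[of p0] nn_integral_left_halfplane_square[of \<theta>\<^sub>0]
    by (simp add: triangle_prob_def J_def)
  have "h / 2 + ((1 - h)^3 - h^3) / 3 \<le> J" "J \<le> h * (h\<^sup>2 + (1 - h)\<^sup>2) + ((1 - h)^3 - h^3) / 3"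
    using sector.integral_weighted_half_mass_square_bounds[of \<theta>\<^sub>0] min
    unfolding half_mass_eq_half_area h_def J_def by auto
  then show ?thesis
    unfolding inf prob h_def[symmetric] by (simp add: power2_eq_square power3_eq_cube field_simps)
qed

end
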